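(* Let $\mathcal{A}$ and $\mathcal{B}$ be unital complex algebras with faithful and regular Sylvester rank functions $\mathrm{rk}_{\mathcal{A}}$ and $\mathrm{rk}_{\mathcal{B}}$. Let $X=(X_1,\dots,X_d)\in\mathcal{A}^d$ and $Y=(Y_1,\dots,Y_d)\in\mathcal{B}^d$ be such that for any matrix $A$ over $\mathbb{C}\langle x_1,\dots,x_d\rangle$, $$\mathrm{rk}_{\mathcal{B}}(A(Y))\le\mathrm{rk}_{\mathcal{A}}(A(X)).$$ Then: (1) there is a unique specialization from the rational closure $\mathcal{A}_X$ to the rational closure $\mathcal{B}_Y$; (2) for any rational expression $R$ in $x_1,\dots,x_d$ such that $R(Y)$ is well-defined, $R(X)$ is also well-defined and $\mathrm{rk}_{\mathcal{B}}(R(Y))\le\mathrm{rk}_{\mathcal{A}}(R(X))$.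
   Context: A Sylvester rank function on a unital complex algebra $\mathcal{A}$ is a function $\mathrm{rk}$ from rectangular matrices over $\mathcal{A}$ to $[0,\infty)$ with: $\mathrm{rk}(0)=0$, $\mathrm{rk}(1)=1$; $\mathrm{rk}(AB)\le\min(\mathrm{rk}A,\mathrm{rk}B)$; $\mathrm{rk}(A\oplus B)=\mathrm{rk}A+\mathrm{rk}B$; $\mathrm{rk}\begin{pmatrix}A&C\\0&B\end{pmatrix}\ge\mathrm{rk}A+\mathrm{rk}B$. It is faithful if $\mathrm{rk}(A)>0$ for all nonzero $A$, and regular if every $A\in M_n(\mathcal{A})$ with $\mathrm{rk}(A)=n$ is invertible. A $\mathbb{C}\langle x_1,\dots,x_d\rangle$-algebra is a unital algebra $\mathcal{C}$ with a homomorphism $\phi:\mathbb{C}\langle x_1,\dots,x_d\rangle\to\mathcal{C}$; $\Sigma_\phi$ is the set of square matrices $A$ over $\mathbb{C}\langle x_1,\dots,x_d\rangle$ (of any size $n$) with $\phi(A)$ invertible in $M_n(\mathcal{C})$; for a tuple $X$ in $\mathcal{C}$ with $\phi(P)=P(X)$ write $\Sigma_X$. The rational closure $\mathcal{A}_X$ is the set of all entries of $A(X)^{-1}$, $A\in\Sigma_X$; it is a subalgebra containing the algebra generated by $X$, regarded as a $\mathbb{C}\langle x\rangle$-algebra via $P\mapsto P(X)$. A subhomomorphism from a $\mathbb{C}\langle x\rangle$-algebra $(\mathcal{C},\phi_{\mathcal{C}})$ to $(\mathcal{D},\phi_{\mathcal{D}})$ is a homomorphism $f:\mathcal{C}_f\to\mathcal{D}$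 defined on a subalgebra $\mathcal{C}_f\supseteq\phi_{\mathcal{C}}(\mathbb{C}\langle x\rangle)$, with structure map $\phi_f=\phi_{\mathcal{C}}$, such that $f\circ\phi_f=\phi_{\mathcal{D}}$ and $\Sigma_{\phi_{\mathcal{D}}}\subseteq\Sigma_{\phi_f}$. Two subhomomorphisms are equivalent if they agree on a subalgebra on which their common restriction is again a subhomomorphism; a specialization is an equivalence class. Rational expressions (combinations of scalars and $x_i$ via $+,\cdot,{}^{-1}$, parentheses) are evaluated recursively in an algebra, an inverse being defined only where the argument is invertible; "well-defined" means $X$ lies in the domain. *)

theory Defs
  imports Complex_Main "Jordan_Normal_Form.Matrix"
begin

text \<open>A unital complex algebra is modelled as a type of class ring_1 together with
  a unital ring homomorphism from the complex numbers into its centre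
  (scalar multiplication c a is emb c * a).\<close>

definition complex_alg :: "(complex \<Rightarrow> 'a::ring_1) \<Rightarrow> bool" where
  "complex_alg emb \<longleftrightarrow>
     emb 1 = 1 \<and> (\<forall>c e. emb (c + e) = emb c + emb e) \<and>
     (\<forall>c e. emb (c * e) = emb c * emb e) \<and> (\<forall>c a. emb c * a = a * emb c)"

definition sylvester_rank :: "('a::ring_1 mat \<Rightarrow> real) \<Rightarrow> bool" where
  "sylvester_rank rk \<longleftrightarrow>
     (\<forall>A. rk A \<ge> 0) \<and>
     (\<forall>m n. rk (0\<^sub>m m n) = 0) \<and>
     rk (1\<^sub>m 1) = 1 \<and>
     (\<forall>A B. dim_col A = dim_row B \<longrightarrow> rk (A * B) \<le> min (rk A) (rk B)) \<and>
     (\<forall>A B. rk (four_block_mat A (0\<^sub>m (dim_row A) (dim_col B)) (0\<^sub>m (dim_row B) (dim_col A)) B)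
             = rk A + rk B) \<and>
     (\<forall>A B C. dim_row C = dim_row A \<longrightarrow> dim_col C = dim_col B \<longrightarrow>
        rk (four_block_mat A C (0\<^sub>m (dim_row B) (dim_col A)) B) \<ge> rk A + rk B)"

definition faithful_rank :: "('a::ring_1 mat \<Rightarrow> real) \<Rightarrow> bool" where
  "faithful_rank rk \<longleftrightarrow> (\<forall>A. A \<noteq> 0\<^sub>m (dim_row A) (dim_col A) \<longrightarrow> rk A > 0)"

definition regular_rank :: "('a::ring_1 mat \<Rightarrow> real) \<Rightarrow> bool" where
  "regular_rank rk \<longleftrightarrow>
     (\<forall>A n. A \<in> carrier_mat n n \<longrightarrow> rk A = real n \<longrightarrow> invertible_mat A)"

text \<open>Variables are indexed from 0, so x_1,...,x_d correspond to Var 0, ..., Var (d-1).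
  Every element of the free algebra is represented by some term; only evaluations
  of terms occur in the statement, so this representation is faithful.\<close>

datatype ncpoly = PConst complex | PVar nat | PAdd ncpoly ncpoly | PMul ncpoly ncpoly

fun pvars :: "ncpoly \<Rightarrow> nat set" where
  "pvars (PConst c) = {}"
| "pvars (PVar i) = {i}"
| "pvars (PAdd p q) = pvars p \<union> pvars q"
| "pvars (PMul p q) = pvars p \<union> pvars q"

fun peval :: "(complex \<Rightarrow> 'a::ring_1) \<Rightarrow> (nat \<Rightarrow> 'a) \<Rightarrow> ncpoly \<Rightarrow> 'a" where
  "peval emb X (PConst c) = emb c"
| "peval emb X (PVar i) = X i"
| "peval emb X (PAdd p q) = peval emb X p + peval emb X q"
| "peval emb X (PMul p q) = peval emb X p * peval emb X q"

definition is_poly :: "nat \<Rightarrow> ncpoly \<Rightarrow> bool" where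
  "is_poly d p \<longleftrightarrow> pvars p \<subseteq> {..<d}"

definition is_poly_mat :: "nat \<Rightarrow> ncpoly mat \<Rightarrow> bool" where
  "is_poly_mat d A \<longleftrightarrow> (\<forall>i<dim_row A. \<forall>j<dim_col A. is_poly d (A $$ (i, j)))"

definition mat_eval :: "(complex \<Rightarrow> 'a::ring_1) \<Rightarrow> (nat \<Rightarrow> 'a) \<Rightarrow> ncpoly mat \<Rightarrow> 'a mat" where
  "mat_eval emb X A = map_mat (peval emb X) A"

definition entries_in :: "'a set \<Rightarrow> 'a mat \<Rightarrow> bool" where
  "entries_in S M \<longleftrightarrow> (\<forall>i<dim_row M. \<forall>j<dim_col M. M $$ (i, j) \<in> S)"

definition inv_in :: "'a::ring_1 set \<Rightarrow> 'a mat \<Rightarrow> bool" where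
  "inv_in S M \<longleftrightarrow> (\<exists>n N. M \<in> carrier_mat n n \<and> N \<in> carrier_mat n n \<and> entries_in S N \<and>
                      M * N = 1\<^sub>m n \<and> N * M = 1\<^sub>m n)"

definition Sigma :: "nat \<Rightarrow> (complex \<Rightarrow> 'a::ring_1) \<Rightarrow> (nat \<Rightarrow> 'a) \<Rightarrow> 'a set \<Rightarrow> ncpoly mat set" where
  "Sigma d emb X S = {A. is_poly_mat d A \<and> square_mat A \<and> inv_in S (mat_eval emb X A)}"

definition rat_closure :: "nat \<Rightarrow> (complex \<Rightarrow> 'a::ring_1) \<Rightarrow> (nat \<Rightarrow> 'a) \<Rightarrow> 'a set" where
  "rat_closure d emb X =
     {N $$ (i, j) | A N n i j. A \<in> Sigma d emb X UNIV \<and> A \<in> carrier_mat n n \<and>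
        N \<in> carrier_mat n n \<and> mat_eval emb X A * N = 1\<^sub>m n \<and> N * mat_eval emb X A = 1\<^sub>m n \<and>
        i < n \<and> j < n}"

definition subalgebra :: "(complex \<Rightarrow> 'a::ring_1) \<Rightarrow> 'a set \<Rightarrow> bool" where
  "subalgebra emb S \<longleftrightarrow> 1 \<in> S \<and> (\<forall>a\<in>S. \<forall>b\<in>S. a + b \<in> S \<and> a * b \<in> S) \<and>
     (\<forall>c. \<forall>a\<in>S. emb c * a \<in> S)"

definition alg_hom_on ::
  "(complex \<Rightarrow> 'a::ring_1) \<Rightarrow> (complex \<Rightarrow> 'b::ring_1) \<Rightarrow> 'a set \<Rightarrow> ('a \<Rightarrow> 'b) \<Rightarrow> bool" where
  "alg_hom_on embA embB S f \<longleftrightarrow> f 1 = 1 \<and>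
     (\<forall>a\<in>S. \<forall>b\<in>S. f (a + b) = f a + f b \<and> f (a * b) = f a * f b) \<and>
     (\<forall>c. \<forall>a\<in>S. f (embA c * a) = embB c * f a)"

definition subhom ::
  "nat \<Rightarrow> (complex \<Rightarrow> 'a::ring_1) \<Rightarrow> (nat \<Rightarrow> 'a) \<Rightarrow> (complex \<Rightarrow> 'b::ring_1) \<Rightarrow> (nat \<Rightarrow> 'b)
     \<Rightarrow> 'a set \<Rightarrow> ('a \<Rightarrow> 'b) \<Rightarrow> bool" where
  "subhom d embA X embB Y S f \<longleftrightarrow>
     subalgebra embA S \<and> S \<subseteq> rat_closure d embA X \<and>
     (\<forall>p. is_poly d p \<longrightarrow> peval embA X p \<in> S) \<and>
     alg_hom_on embA embB S f \<and> f ` S \<subseteq> rat_closure d embB Y \<and>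
     (\<forall>p. is_poly d p \<longrightarrow> f (peval embA X p) = peval embB Y p) \<and>
     Sigma d embB Y (rat_closure d embB Y) \<subseteq> Sigma d embA X S"

definition subhom_equiv ::
  "nat \<Rightarrow> (complex \<Rightarrow> 'a::ring_1) \<Rightarrow> (nat \<Rightarrow> 'a) \<Rightarrow> (complex \<Rightarrow> 'b::ring_1) \<Rightarrow> (nat \<Rightarrow> 'b)
     \<Rightarrow> 'a set \<Rightarrow> ('a \<Rightarrow> 'b) \<Rightarrow> 'a set \<Rightarrow> ('a \<Rightarrow> 'b) \<Rightarrow> bool" where
  "subhom_equiv d embA X embB Y S f T g \<longleftrightarrow>
     (\<exists>U. U \<subseteq> S \<inter> T \<and> (\<forall>u\<in>U. f u = g u) \<and> subhom d embA X embB Y U f)"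

definition unique_specialization ::
  "nat \<Rightarrow> (complex \<Rightarrow> 'a::ring_1) \<Rightarrow> (nat \<Rightarrow> 'a) \<Rightarrow> (complex \<Rightarrow> 'b::ring_1) \<Rightarrow> (nat \<Rightarrow> 'b) \<Rightarrow> bool" where
  "unique_specialization d embA X embB Y \<longleftrightarrow>
     (\<exists>S f. subhom d embA X embB Y S f) \<and>
     (\<forall>S f T g. subhom d embA X embB Y S f \<longrightarrow> subhom d embA X embB Y T g \<longrightarrow>
        subhom_equiv d embA X embB Y S f T g)"

datatype ratexp = RConst complex | RVar nat | RAdd ratexp ratexp | RMul ratexp ratexp | RInv ratexp

fun rvars :: "ratexp \<Rightarrow> nat set" where
  "rvars (RConst c) = {}"
| "rvars (RVar i) = {i}"
| "rvars (RAdd p q) = rvars p \<union> rvars q"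
| "rvars (RMul p q) = rvars p \<union> rvars q"
| "rvars (RInv p) = rvars p"

text \<open>Recursive evaluation; None means "not well-defined".\<close>
fun reval :: "(complex \<Rightarrow> 'a::ring_1) \<Rightarrow> (nat \<Rightarrow> 'a) \<Rightarrow> ratexp \<Rightarrow> 'a option" where
  "reval emb X (RConst c) = Some (emb c)"
| "reval emb X (RVar i) = Some (X i)"
| "reval emb X (RAdd p q) =
     (case (reval emb X p, reval emb X q) of (Some a, Some b) \<Rightarrow> Some (a + b) | _ \<Rightarrow> None)"
| "reval emb X (RMul p q) =
     (case (reval emb X p, reval emb X q) of (Some a, Some b) \<Rightarrow> Some (a * b) | _ \<Rightarrow> None)"
| "reval emb X (RInv p) =
     (case reval emb X p of Some a \<Rightarrow> (if (\<exists>b. a * b = 1 \<and> b * a = 1)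
                                          then Some (THE b. a * b = 1 \<and> b * a = 1) else None)
                        | None \<Rightarrow> None)"

definition mat1 :: "'a \<Rightarrow> 'a mat" where
  "mat1 a = mat 1 1 (\<lambda>_. a)"

end

theory Submission
  imports Defs
begin

text \<open>
  Call u \<in> A and v \<in> B jointly represented if there is one polynomial triple (M, b, c),
  M square, such that M(X) and M(Y) are invertible, u = c(X) M(X)\<inverse> b(X) and
  v = c(Y) M(Y)\<inverse> b(Y) (a linear representation in the sense of Cohn).
  A Schur complement computation gives rk [M b; c 0] = n + rk(c M\<inverse> b), so the
  hypothesis transfers to jointly represented pairs: rk_B v \<le> rk_A u.
  Linear representations are closed under sums, products and entries of inverses, so the
  jointly represented pairs contain the polynomials and are closed under the ring operations.
  Faithfulness of rk_B makes the relation single-valued (v - v' is represented together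
  with u - u = 0), and regularity of rk_A makes it closed under inverses (rk_B v = 1
  forces rk_A u = 1).
  The graph of the relation is therefore a subhomomorphism; it is contained in every
  subhomomorphism, which gives uniqueness, and rational expressions are handled by induction.
\<close>

definition mat_inverse :: "nat \<Rightarrow> 'a::ring_1 mat \<Rightarrow> 'a mat \<Rightarrow> bool" where
  "mat_inverse n A N \<longleftrightarrow>
     A \<in> carrier_mat n n \<and> N \<in> carrier_mat n n \<and> A * N = 1\<^sub>m n \<and> N * A = 1\<^sub>m n"

lemma mat_left_inverse_cancel:
  fixes A :: "'a::ring_1 mat"
  assumes "A \<in> carrier_mat n n" "B \<in> carrier_mat n n" "B * A = 1\<^sub>m n" "dim_row M = n"
  shows "B * (A * M) = M"
proof -
  have M: "M \<in> carrier_mat n (dim_col M)" using assms(4) by auto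
  have "B * (A * M) = (B * A) * M" using assoc_mult_mat[OF assms(2) assms(1) M] by simp
  thus ?thesis using assms M by simp
qed

lemma assoc_mult_mat_dims:
  fixes A :: "'a::semiring_0 mat"
  shows "dim_col A = dim_row B \<Longrightarrow> dim_col B = dim_row C \<Longrightarrow> (A * B) * C = A * (B * C)"
  by (rule assoc_mult_mat[of _ "dim_row A" "dim_col A" _ "dim_col B" _ "dim_col C"]) auto

lemma mat_inverse_unique:
  assumes "mat_inverse n A N" "N' \<in> carrier_mat n n" "A * N' = 1\<^sub>m n"
  shows "N' = N"
proof -
  have A: "A \<in> carrier_mat n n" "N \<in> carrier_mat n n" "N * A = 1\<^sub>m n"
    using assms(1) unfolding mat_inverse_def by auto
  have "N * (A * N') = N'" by (rule mat_left_inverse_cancel[OF A]) (use assms in auto)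
  thus ?thesis using assms(3) A by simp
qed

lemma mat_inverse_one: "mat_inverse n (1\<^sub>m n) (1\<^sub>m n)"
  unfolding mat_inverse_def by auto

lemma mat_inverse_upper_block:
  assumes P: "mat_inverse n1 P P'" and Q: "mat_inverse n2 Q Q'" and R: "R \<in> carrier_mat n1 n2"
  shows "mat_inverse (n1 + n2) (four_block_mat P R (0\<^sub>m n2 n1) Q)
     (four_block_mat P' (- (P' * R * Q')) (0\<^sub>m n2 n1) Q')"
proof -
  have c: "P \<in> carrier_mat n1 n1" "P' \<in> carrier_mat n1 n1" "P * P' = 1\<^sub>m n1" "P' * P = 1\<^sub>m n1"
    "Q \<in> carrier_mat n2 n2" "Q' \<in> carrier_mat n2 n2" "Q * Q' = 1\<^sub>m n2" "Q' * Q = 1\<^sub>m n2"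
    using P Q unfolding mat_inverse_def by auto
  note cP = mat_left_inverse_cancel[OF c(2,1,3)] and cQ = mat_left_inverse_cancel[OF c(5,6,8)]
  have "P' * (R * Q') * Q = P' * ((R * Q') * Q)"
    by (rule assoc_mult_mat[of _ n1 n1 _ n2 _ n2]) (use c R in auto)
  also have "(R * Q') * Q = R" using c R by simp
  finally have e: "P' * (R * Q') * Q = P' * R" .
  have "four_block_mat P R (0\<^sub>m n2 n1) Q * four_block_mat P' (- (P' * R * Q')) (0\<^sub>m n2 n1) Q'
     = 1\<^sub>m (n1 + n2)"
    apply (subst mult_four_block_mat[of _ n1 n1 _ n2 _ n2 _ _ n1 _ n2])
    using c R cP by (auto simp: four_block_one_mat[symmetric] simp del: four_block_one_mat)
  moreover have "four_block_mat P' (- (P' * R * Q')) (0\<^sub>m n2 n1) Q' * four_block_mat P R (0\<^sub>m n2 n1) Q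
     = 1\<^sub>m (n1 + n2)"
    apply (subst mult_four_block_mat[of _ n1 n1 _ n2 _ n2 _ _ n1 _ n2])
    using c R cQ e by (auto simp: four_block_one_mat[symmetric] simp del: four_block_one_mat)
  ultimately show ?thesis unfolding mat_inverse_def using c R by auto
qed

lemma mat_inverse_lower_block:
  assumes P: "mat_inverse n1 P P'" and Q: "mat_inverse n2 Q Q'" and R: "R \<in> carrier_mat n2 n1"
  shows "mat_inverse (n1 + n2) (four_block_mat P (0\<^sub>m n1 n2) R Q)
     (four_block_mat P' (0\<^sub>m n1 n2) (- (Q' * R * P')) Q')"
proof -
  have c: "P \<in> carrier_mat n1 n1" "P' \<in> carrier_mat n1 n1" "P * P' = 1\<^sub>m n1" "P' * P = 1\<^sub>m n1"
    "Q \<in> carrier_mat n2 n2" "Q' \<in> carrier_mat n2 n2" "Q * Q' = 1\<^sub>m n2" "Q' * Q = 1\<^sub>m n2"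
    using P Q unfolding mat_inverse_def by auto
  note cQ = mat_left_inverse_cancel[OF c(6,5,7)]
  have "Q' * (R * P') * P = Q' * ((R * P') * P)"
    by (rule assoc_mult_mat[of _ n2 n2 _ n1 _ n1]) (use c R in auto)
  also have "(R * P') * P = R" using c R by simp
  finally have e: "Q' * (R * P') * P = Q' * R" .
  have "four_block_mat P (0\<^sub>m n1 n2) R Q * four_block_mat P' (0\<^sub>m n1 n2) (- (Q' * R * P')) Q'
     = 1\<^sub>m (n1 + n2)"
    apply (subst mult_four_block_mat[of _ n1 n1 _ n2 _ n2 _ _ n1 _ n2])
    using c R cQ by (auto simp: four_block_one_mat[symmetric] simp del: four_block_one_mat)
  moreover have "four_block_mat P' (0\<^sub>m n1 n2) (- (Q' * R * P')) Q' * four_block_mat P (0\<^sub>m n1 n2) R Q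
     = 1\<^sub>m (n1 + n2)"
    apply (subst mult_four_block_mat[of _ n1 n1 _ n2 _ n2 _ _ n1 _ n2])
    using c R e by (auto simp: four_block_one_mat[symmetric] simp del: four_block_one_mat)
  ultimately show ?thesis unfolding mat_inverse_def using c R by auto
qed

lemma mat_inverse_conj:
  assumes P: "mat_inverse n P P'" and Q: "mat_inverse n Q Q'" and C: "C \<in> carrier_mat n n"
    and D: "mat_inverse n D D'" and eq: "P * C * Q = D"
  shows "mat_inverse n C (Q * D' * P)"
proof -
  have c: "P \<in> carrier_mat n n" "P' \<in> carrier_mat n n" "P * P' = 1\<^sub>m n" "P' * P = 1\<^sub>m n"
    "Q \<in> carrier_mat n n" "Q' \<in> carrier_mat n n" "Q * Q' = 1\<^sub>m n" "Q' * Q = 1\<^sub>m n"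
    "D \<in> carrier_mat n n" "D' \<in> carrier_mat n n" "D * D' = 1\<^sub>m n" "D' * D = 1\<^sub>m n"
    using P Q D unfolding mat_inverse_def by auto
  note cP = mat_left_inverse_cancel[OF c(2,1,3)] and cP' = mat_left_inverse_cancel[OF c(1,2,4)]
    and cQ' = mat_left_inverse_cancel[OF c(5,6,8)]
    and cD = mat_left_inverse_cancel[OF c(10,9,11)] and cD' = mat_left_inverse_cancel[OF c(9,10,12)]
  have "P * C * Q * Q' = P * C * (Q * Q')" by (rule assoc_mult_mat) (use c C in auto)
  hence "D * Q' = P * C" unfolding eq using c C by simp
  hence "P' * (D * Q') = C" using c C cP' by simp
  hence Ce: "C = P' * (D * Q')" by simp
  note dims = c(1,2,5,6,9,10)[THEN carrier_matD(1)] c(1,2,5,6,9,10)[THEN carrier_matD(2)]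
  have "C * (Q * D' * P) = 1\<^sub>m n" unfolding Ce using c cQ' cD dims by (simp add: assoc_mult_mat_dims)
  moreover have "(Q * D' * P) * C = 1\<^sub>m n" unfolding Ce using c cP cD' dims
    by (simp add: assoc_mult_mat_dims)
  ultimately show ?thesis unfolding mat_inverse_def using c C by auto
qed

lemma invertible_mat_imp_mat_inverse:
  fixes A :: "'a::ring_1 mat"
  assumes A: "A \<in> carrier_mat n n" and inv: "invertible_mat A"
  shows "\<exists>N. mat_inverse n A N"
proof -
  obtain N where N: "A * N = 1\<^sub>m (dim_row A)" "N * A = 1\<^sub>m (dim_row N)"
    using inv unfolding invertible_mat_def inverts_mat_def by blast
  have "dim_row N = n" using arg_cong[OF N(2), of dim_col] A by simp
  moreover have "dim_col N = n" using arg_cong[OF N(1), of dim_col] A by simp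
  ultimately show ?thesis unfolding mat_inverse_def using A N by (intro exI[of _ N]) auto
qed

lemma four_block_mat_empty:
  assumes "A \<in> carrier_mat nr nc" "B \<in> carrier_mat nr 0" "C \<in> carrier_mat 0 nc" "D \<in> carrier_mat 0 0"
  shows "four_block_mat A B C D = A"
  by (rule eq_matI) (use assms in auto)

lemma uminus_zero_mat [simp]: "- 0\<^sub>m n m = (0\<^sub>m n m :: 'a::group_add mat)"
  by (rule eq_matI) auto

lemma mat1_carrier [simp]: "mat1 a \<in> carrier_mat 1 1"
  unfolding mat1_def by auto

lemma mat1_carrier_Suc_0 [simp]: "mat1 a \<in> carrier_mat (Suc 0) (Suc 0)"
  unfolding mat1_def by auto

lemma mat1_dims [simp]: "dim_row (mat1 a) = 1" "dim_col (mat1 a) = 1"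
  unfolding mat1_def by auto

lemma mat1_index [simp]: "mat1 a $$ (0, 0) = a"
  unfolding mat1_def by auto

lemma mat1_eq_iff: "mat1 a = mat1 b \<longleftrightarrow> a = b"
  by (metis mat1_index)

lemma carrier_mat_1_1_eq_mat1: "M \<in> carrier_mat 1 1 \<Longrightarrow> M = mat1 (M $$ (0, 0))"
  unfolding mat1_def by (rule eq_matI) auto

lemma mat1_mult: "mat1 (a::'a::semiring_0) * mat1 b = mat1 (a * b)"
  unfolding mat1_def by (rule eq_matI) (auto simp: scalar_prod_def)

lemma mat1_add: "mat1 (a::'a::monoid_add) + mat1 b = mat1 (a + b)"
  unfolding mat1_def by (rule eq_matI) auto

lemma mat1_uminus: "- mat1 (a::'a::group_add) = mat1 (- a)"
  unfolding mat1_def by (rule eq_matI) auto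

lemma mat1_one: "1\<^sub>m 1 = mat1 1"
  unfolding mat1_def by (rule eq_matI) auto

lemma mat1_zero: "0\<^sub>m 1 1 = mat1 0"
  unfolding mat1_def by (rule eq_matI) auto

lemma mat_inverse_mat1_iff:
  "mat_inverse 1 (mat1 u) (mat1 w) \<longleftrightarrow> u * w = 1 \<and> w * (u::'a::ring_1) = 1"
  unfolding mat_inverse_def mat1_mult mat1_one mat1_eq_iff by simp

definition unit_row :: "nat \<Rightarrow> nat \<Rightarrow> 'a::zero_neq_one mat" where
  "unit_row n k = mat 1 n (\<lambda>(i, j). if j = k then 1 else 0)"

definition unit_col :: "nat \<Rightarrow> nat \<Rightarrow> 'a::zero_neq_one mat" where
  "unit_col n k = mat n 1 (\<lambda>(i, j). if i = k then 1 else 0)"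

lemma unit_row_carrier [simp]: "unit_row n k \<in> carrier_mat 1 n"
  unfolding unit_row_def by auto

lemma unit_col_carrier [simp]: "unit_col n k \<in> carrier_mat n 1"
  unfolding unit_col_def by auto

lemma unit_row_mult_mult_unit_col:
  fixes M :: "'a::ring_1 mat"
  assumes M: "M \<in> carrier_mat n m" and i: "i < n" and j: "j < m"
  shows "unit_row n i * M * unit_col m j = mat1 (M $$ (i, j))"
proof -
  have row: "unit_row n i * M = mat 1 m (\<lambda>(_, k). M $$ (i, k))"
  proof (rule eq_matI)
    fix a k assume a: "a < dim_row (mat 1 m (\<lambda>(_, k). M $$ (i, k)))"
      "k < dim_col (mat 1 m (\<lambda>(_, k). M $$ (i, k)))"
    have "(unit_row n i * M) $$ (a, k) = (\<Sum>l\<in>{0..<n}. (if l = i then 1 else 0) * M $$ (l, k))"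
      using a M unfolding unit_row_def by (auto simp: scalar_prod_def)
    also have "\<dots> = (\<Sum>l\<in>{0..<n}. (if l = i then M $$ (l, k) else 0))"
      by (rule sum.cong) auto
    also have "\<dots> = M $$ (i, k)" using i by simp
    finally show "(unit_row n i * M) $$ (a, k) = mat 1 m (\<lambda>(_, k). M $$ (i, k)) $$ (a, k)"
      using a by simp
  qed (use M in \<open>auto simp: unit_row_def\<close>)
  show ?thesis unfolding row
  proof (rule eq_matI)
    fix a k assume a: "a < dim_row (mat1 (M $$ (i, j)))" "k < dim_col (mat1 (M $$ (i, j)))"
    have "(mat 1 m (\<lambda>(_, k). M $$ (i, k)) * unit_col m j) $$ (a, k)
        = (\<Sum>l\<in>{0..<m}. M $$ (i, l) * (if l = j then 1 else 0))"
      using a unfolding unit_col_def by (auto simp: scalar_prod_def)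
    also have "\<dots> = (\<Sum>l\<in>{0..<m}. (if l = j then M $$ (i, l) else 0))"
      by (rule sum.cong) auto
    also have "\<dots> = M $$ (i, j)" using j by simp
    finally show "(mat 1 m (\<lambda>(_, k). M $$ (i, k)) * unit_col m j) $$ (a, k) = mat1 (M $$ (i, j)) $$ (a, k)"
      using a by simp
  qed (auto simp: unit_col_def)
qed

section \<open>Sylvester rank functions\<close>

definition border_mat :: "'a::zero mat \<Rightarrow> 'a mat \<Rightarrow> 'a mat \<Rightarrow> 'a mat" where
  "border_mat A b c = four_block_mat A b c (0\<^sub>m 1 1)"

lemma border_mat_carrier:
  "A \<in> carrier_mat n n \<Longrightarrow> b \<in> carrier_mat n 1 \<Longrightarrow> c \<in> carrier_mat 1 n \<Longrightarrow>
   border_mat A b c \<in> carrier_mat (n + 1) (n + 1)"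
  unfolding border_mat_def by auto

lemma border_mat_elimination:
  assumes AN: "mat_inverse n A N" and b: "b \<in> carrier_mat n 1" and c: "c \<in> carrier_mat 1 n"
  shows "four_block_mat (1\<^sub>m n) (0\<^sub>m n 1) (- (c * N)) (1\<^sub>m 1) * border_mat A b c
       * four_block_mat (1\<^sub>m n) (- (N * b)) (0\<^sub>m 1 n) (1\<^sub>m 1)
       = four_block_mat A (0\<^sub>m n 1) (0\<^sub>m 1 n) (- (c * N * b))"
proof -
  have cc: "A \<in> carrier_mat n n" "N \<in> carrier_mat n n" "A * N = 1\<^sub>m n" "N * A = 1\<^sub>m n"
    using AN unfolding mat_inverse_def by auto
  have "c * N * A = c" using cc c by simp
  hence left: "four_block_mat (1\<^sub>m n) (0\<^sub>m n 1) (- (c * N)) (1\<^sub>m 1) * border_mat A b c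
     = four_block_mat A b (0\<^sub>m 1 n) (- (c * N * b))"
    unfolding border_mat_def
    by (subst mult_four_block_mat[of _ n n _ 1 _ 1 _ _ n _ 1]) (use cc b c in auto)
  show ?thesis unfolding left
    by (subst mult_four_block_mat[of _ n n _ 1 _ 1 _ _ n _ 1])
      (use cc b c mat_left_inverse_cancel[OF cc(2,1,3)] in auto)
qed

lemma border_mat_elimination_factors:
  assumes "N \<in> carrier_mat n n" "b \<in> carrier_mat n 1" "c \<in> carrier_mat 1 n"
  shows "mat_inverse (n + 1) (four_block_mat (1\<^sub>m n) (0\<^sub>m n 1) (- (c * N)) (1\<^sub>m 1))
           (four_block_mat (1\<^sub>m n) (0\<^sub>m n 1) (c * N) (1\<^sub>m 1))"
    and "mat_inverse (n + 1) (four_block_mat (1\<^sub>m n) (- (N * b)) (0\<^sub>m 1 n) (1\<^sub>m 1))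
           (four_block_mat (1\<^sub>m n) (N * b) (0\<^sub>m 1 n) (1\<^sub>m 1))"
  using mat_inverse_lower_block[OF mat_inverse_one[of n] mat_inverse_one[of 1], of "- (c * N)"]
    mat_inverse_upper_block[OF mat_inverse_one[of n] mat_inverse_one[of 1], of "- (N * b)"] assms
  by auto

context
  fixes rk :: "'a::ring_1 mat \<Rightarrow> real"
  assumes rk: "sylvester_rank rk"
begin

lemma rank_mult_le_left: "dim_col A = dim_row B \<Longrightarrow> rk (A * B) \<le> rk A"
  using rk unfolding sylvester_rank_def by fastforce

lemma rank_mult_le_right: "dim_col A = dim_row B \<Longrightarrow> rk (A * B) \<le> rk B"
  using rk unfolding sylvester_rank_def by fastforce

lemma rank_diag_block:
  "rk (four_block_mat A (0\<^sub>m (dim_row A) (dim_col B)) (0\<^sub>m (dim_row B) (dim_col A)) B) = rk A + rk B"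
  using rk unfolding sylvester_rank_def by blast

lemma rank_zero_mat: "rk (0\<^sub>m m n) = 0"
  using rk unfolding sylvester_rank_def by blast

lemma rank_one_mat: "rk (1\<^sub>m n) = real n"
proof (induction n)
  case 0
  have "(1\<^sub>m 0 :: 'a mat) = 0\<^sub>m 0 0" by (rule eq_matI) auto
  thus ?case using rank_zero_mat by simp
next
  case (Suc n)
  have "(1\<^sub>m (Suc n) :: 'a mat) = four_block_mat (1\<^sub>m n) (0\<^sub>m n 1) (0\<^sub>m 1 n) (1\<^sub>m 1)"
    using four_block_one_mat[of n 1] by simp
  also have "rk \<dots> = rk (1\<^sub>m n) + rk (1\<^sub>m 1)" using rank_diag_block[of "1\<^sub>m n" "1\<^sub>m 1"] by simp
  finally show ?case using Suc rk unfolding sylvester_rank_def by simp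
qed

lemma rank_le_dim_row: "A \<in> carrier_mat n m \<Longrightarrow> rk A \<le> real n"
  using rank_mult_le_left[of "1\<^sub>m n" A] rank_one_mat[of n] by auto

lemma rank_mat_inverse: "mat_inverse n A N \<Longrightarrow> rk A = real n"
  unfolding mat_inverse_def using rank_mult_le_left[of A N] rank_le_dim_row[of A n n] rank_one_mat[of n]
  by auto

lemma rank_mult_invertible:
  assumes P: "mat_inverse n P P'" and Q: "mat_inverse m Q Q'" and C: "C \<in> carrier_mat n m"
  shows "rk (P * C * Q) = rk C"
proof -
  have c: "P \<in> carrier_mat n n" "P' \<in> carrier_mat n n" "P' * P = 1\<^sub>m n"
    "Q \<in> carrier_mat m m" "Q' \<in> carrier_mat m m" "Q * Q' = 1\<^sub>m m"
    using P Q unfolding mat_inverse_def by auto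
  have "P' * (P * C * Q) * Q' = P' * (P * (C * (Q * Q')))" using c C by (simp add: assoc_mult_mat_dims)
  also have "\<dots> = C" using c C mat_left_inverse_cancel[OF c(1,2,3)] by simp
  finally have "rk C \<le> rk (P * C * Q)"
    using rank_mult_le_left[of "P' * (P * C * Q)" Q'] rank_mult_le_right[of P' "P * C * Q"] c C
    by fastforce
  moreover have "rk (P * C * Q) \<le> rk C"
    using rank_mult_le_left[of "P * C" Q] rank_mult_le_right[of P C] c C by fastforce
  ultimately show ?thesis by simp
qed

lemma rank_uminus: "C \<in> carrier_mat n m \<Longrightarrow> rk (- C) = rk C"
  using rank_mult_invertible[of n "- 1\<^sub>m n" "- 1\<^sub>m n" m "1\<^sub>m m" "1\<^sub>m m" C] mat_inverse_one
  by (auto simp: mat_inverse_def)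

lemma rank_border_mat:
  assumes AN: "mat_inverse n A N" and b: "b \<in> carrier_mat n 1" and c: "c \<in> carrier_mat 1 n"
  shows "rk (border_mat A b c) = real n + rk (c * N * b)"
proof -
  have A: "A \<in> carrier_mat n n" "N \<in> carrier_mat n n" using AN unfolding mat_inverse_def by auto
  have "rk (border_mat A b c) = rk (four_block_mat A (0\<^sub>m n 1) (0\<^sub>m 1 n) (- (c * N * b)))"
    using rank_mult_invertible[OF border_mat_elimination_factors[OF A(2) b c]
        border_mat_carrier[OF A(1) b c]]
      border_mat_elimination[OF AN b c] by simp
  also have "\<dots> = rk A + rk (- (c * N * b))"
    using rank_diag_block[of A "- (c * N * b)"] A b c by simp
  also have "\<dots> = real n + rk (c * N * b)"
    using rank_mat_inverse[OF AN] rank_uminus[of "c * N * b" 1 1] A b c by simp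
  finally show ?thesis .
qed

end

lemma regular_rank_imp_mat_inverse:
  assumes "sylvester_rank rk" "regular_rank rk" "A \<in> carrier_mat n n" "rk A \<ge> real n"
  shows "\<exists>N. mat_inverse n A N"
proof -
  have "rk A = real n" using rank_le_dim_row[OF assms(1,3)] assms(4) by simp
  hence "invertible_mat A" using assms(2,3) unfolding regular_rank_def by blast
  thus ?thesis by (rule invertible_mat_imp_mat_inverse[OF assms(3)])
qed

lemma regular_rank_mat1_unit:
  fixes u :: "'a::ring_1"
  assumes "sylvester_rank rk" "regular_rank rk" "rk (mat1 u) \<ge> 1"
  shows "\<exists>w. u * w = 1 \<and> w * u = 1"
proof -
  obtain N where N: "mat_inverse 1 (mat1 u) N"
    using regular_rank_imp_mat_inverse[OF assms(1,2) mat1_carrier] assms(3) by auto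
  hence "N = mat1 (N $$ (0, 0))" by (intro carrier_mat_1_1_eq_mat1) (simp add: mat_inverse_def)
  thus ?thesis using N by (metis mat_inverse_mat1_iff)
qed

section \<open>Linear representations\<close>

definition lin_rep :: "nat \<Rightarrow> 'a::ring_1 mat \<Rightarrow> 'a mat \<Rightarrow> 'a mat \<Rightarrow> 'a mat \<Rightarrow> 'a \<Rightarrow> bool" where
  "lin_rep n A c b N u \<longleftrightarrow>
     mat_inverse n A N \<and> c \<in> carrier_mat 1 n \<and> b \<in> carrier_mat n 1 \<and> mat1 u = c * N * b"

lemma lin_rep_carrier:
  assumes "lin_rep n A c b N u"
  shows "A \<in> carrier_mat n n" "c \<in> carrier_mat 1 n" "b \<in> carrier_mat n 1" "N \<in> carrier_mat n n"
  using assms unfolding lin_rep_def mat_inverse_def by auto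

lemma lin_rep_dims:
  "lin_rep n A c b N u \<Longrightarrow> dim_row A = n \<and> dim_col A = n \<and> dim_row c = 1 \<and> dim_col c = n \<and>
   dim_row b = n \<and> dim_col b = 1 \<and> dim_row N = n \<and> dim_col N = n"
  unfolding lin_rep_def mat_inverse_def by auto

lemma lin_rep_scalar: "lin_rep 1 (1\<^sub>m 1) (mat1 p) (1\<^sub>m 1) (1\<^sub>m 1) p"
  unfolding lin_rep_def mat_inverse_def by auto

lemma lin_rep_inverse_entry:
  assumes "mat_inverse n A N" "i < n" "j < n"
  shows "lin_rep n A (unit_row n i) (unit_col n j) N (N $$ (i, j))"
  using assms unit_row_mult_mult_unit_col[of N n n i j] unit_row_carrier[of n i] unit_col_carrier[of n j]
  unfolding lin_rep_def mat_inverse_def by auto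

lemma lin_rep_uminus: "lin_rep n A c b N u \<Longrightarrow> lin_rep n A (- c) b N (- u)"
  unfolding lin_rep_def mat_inverse_def by (auto simp: mat1_uminus[symmetric])

lemma lin_rep_add:
  assumes r1: "lin_rep n1 A1 c1 b1 N1 u1" and r2: "lin_rep n2 A2 c2 b2 N2 u2"
  shows "lin_rep (n1 + n2) (four_block_mat A1 (0\<^sub>m n1 n2) (0\<^sub>m n2 n1) A2)
     (four_block_mat c1 c2 (0\<^sub>m 0 n1) (0\<^sub>m 0 n2)) (four_block_mat b1 (0\<^sub>m n1 0) b2 (0\<^sub>m n2 0))
     (four_block_mat N1 (0\<^sub>m n1 n2) (0\<^sub>m n2 n1) N2) (u1 + u2)"
proof -
  have h1: "mat_inverse n1 A1 N1" "mat1 u1 = c1 * N1 * b1"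
    and h2: "mat_inverse n2 A2 N2" "mat1 u2 = c2 * N2 * b2"
    using r1 r2 by (auto simp: lin_rep_def)
  note c1 = lin_rep_carrier[OF r1] and c2 = lin_rep_carrier[OF r2]
  have "mat_inverse (n1 + n2) (four_block_mat A1 (0\<^sub>m n1 n2) (0\<^sub>m n2 n1) A2)
      (four_block_mat N1 (- (N1 * 0\<^sub>m n1 n2 * N2)) (0\<^sub>m n2 n1) N2)"
    by (rule mat_inverse_upper_block[OF h1(1) h2(1)]) auto
  moreover have "- (N1 * 0\<^sub>m n1 n2 * N2) = 0\<^sub>m n1 n2" using c1 c2 by simp
  moreover have "four_block_mat c1 c2 (0\<^sub>m 0 n1) (0\<^sub>m 0 n2) * four_block_mat N1 (0\<^sub>m n1 n2) (0\<^sub>m n2 n1) N2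
     = four_block_mat (c1 * N1) (c2 * N2) (0\<^sub>m 0 n1) (0\<^sub>m 0 n2)"
    by (subst mult_four_block_mat[of c1 1 n1 c2 n2 "0\<^sub>m 0 n1" 0 "0\<^sub>m 0 n2" N1 n1 "0\<^sub>m n1 n2" n2])
      (use c1 c2 in auto)
  moreover have "four_block_mat (c1 * N1) (c2 * N2) (0\<^sub>m 0 n1) (0\<^sub>m 0 n2) * four_block_mat b1 (0\<^sub>m n1 0) b2 (0\<^sub>m n2 0)
     = c1 * N1 * b1 + c2 * N2 * b2"
    apply (subst mult_four_block_mat[of "c1 * N1" 1 n1 "c2 * N2" n2 "0\<^sub>m 0 n1" 0 "0\<^sub>m 0 n2" b1 1 "0\<^sub>m n1 0" 0])
    using c1 c2 apply auto[8]
    by (rule four_block_mat_empty[of _ 1 1]) (use c1 c2 in auto)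
  ultimately show ?thesis unfolding lin_rep_def using c1 c2 h1 h2 by (auto simp: mat1_add[symmetric])
qed

lemma lin_rep_mult:
  assumes r1: "lin_rep n1 A1 c1 b1 N1 u1" and r2: "lin_rep n2 A2 c2 b2 N2 u2"
  shows "lin_rep (n1 + n2) (four_block_mat A1 (- (b1 * c2)) (0\<^sub>m n2 n1) A2)
     (four_block_mat c1 (0\<^sub>m 1 n2) (0\<^sub>m 0 n1) (0\<^sub>m 0 n2)) (four_block_mat (0\<^sub>m n1 1) (0\<^sub>m n1 0) b2 (0\<^sub>m n2 0))
     (four_block_mat N1 (N1 * (b1 * (c2 * N2))) (0\<^sub>m n2 n1) N2) (u1 * u2)"
proof -
  have h1: "mat_inverse n1 A1 N1" "mat1 u1 = c1 * N1 * b1"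
    and h2: "mat_inverse n2 A2 N2" "mat1 u2 = c2 * N2 * b2"
    using r1 r2 by (auto simp: lin_rep_def)
  note c1 = lin_rep_carrier[OF r1] and c2 = lin_rep_carrier[OF r2]
  have "- (N1 * - (b1 * c2) * N2) = N1 * (b1 * c2) * N2" using c1 c2 by simp
  also have "\<dots> = N1 * (b1 * (c2 * N2))" using c1 c2 by (simp add: assoc_mult_mat_dims)
  finally have "mat_inverse (n1 + n2) (four_block_mat A1 (- (b1 * c2)) (0\<^sub>m n2 n1) A2)
      (four_block_mat N1 (N1 * (b1 * (c2 * N2))) (0\<^sub>m n2 n1) N2)"
    using mat_inverse_upper_block[OF h1(1) h2(1), of "- (b1 * c2)"] c1 c2 by auto
  moreover
  have "four_block_mat c1 (0\<^sub>m 1 n2) (0\<^sub>m 0 n1) (0\<^sub>m 0 n2) * four_block_mat N1 (N1 * (b1 * (c2 * N2))) (0\<^sub>m n2 n1) N2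
     = four_block_mat (c1 * N1) (c1 * (N1 * (b1 * (c2 * N2)))) (0\<^sub>m 0 n1) (0\<^sub>m 0 n2)"
    by (subst mult_four_block_mat[of c1 1 n1 "0\<^sub>m 1 n2" n2 "0\<^sub>m 0 n1" 0 "0\<^sub>m 0 n2" N1 n1 _ n2])
      (use c1 c2 in auto)
  moreover have "four_block_mat (c1 * N1) (c1 * (N1 * (b1 * (c2 * N2)))) (0\<^sub>m 0 n1) (0\<^sub>m 0 n2)
      * four_block_mat (0\<^sub>m n1 1) (0\<^sub>m n1 0) b2 (0\<^sub>m n2 0)
     = c1 * (N1 * (b1 * (c2 * N2))) * b2"
    apply (subst mult_four_block_mat[of "c1 * N1" 1 n1 _ n2 "0\<^sub>m 0 n1" 0 "0\<^sub>m 0 n2" _ 1 "0\<^sub>m n1 0" 0])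
    using c1 c2 apply auto[8]
    by (rule trans[OF four_block_mat_empty[of _ 1 1]]) (use c1 c2 in auto)
  moreover have "c1 * (N1 * (b1 * (c2 * N2))) * b2 = (c1 * N1 * b1) * (c2 * N2 * b2)"
    using c1 c2 by (simp add: assoc_mult_mat_dims)
  ultimately show ?thesis unfolding lin_rep_def using c1 c2 h1 h2 by (auto simp: mat1_mult[symmetric])
qed

text \<open>Conjugating by the elimination factors reduces this to inverting diag(A, -u).\<close>

lemma lin_rep_border_mat_inverse:
  assumes r: "lin_rep n A c b N u" and w: "u * w = 1" "w * u = 1"
  shows "\<exists>K. lin_rep (n + 1) (border_mat A b c) (unit_row (n + 1) n) (unit_col (n + 1) n) K (- w)"
proof -
  have h: "mat_inverse n A N" "mat1 u = c * N * b" using r by (auto simp: lin_rep_def)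
  note cr = lin_rep_carrier[OF r]
  have "mat_inverse 1 (- (c * N * b)) (- mat1 w)"
    unfolding mat_inverse_def h(2)[symmetric] using w by (auto simp: mat1_uminus mat1_mult mat1_one)
  from mat_inverse_upper_block[OF h(1) this, of "0\<^sub>m n 1"]
  have D: "mat_inverse (n + 1) (four_block_mat A (0\<^sub>m n 1) (0\<^sub>m 1 n) (- (c * N * b)))
     (four_block_mat N (0\<^sub>m n 1) (0\<^sub>m 1 n) (- mat1 w))" using cr by simp
  define L where "L = four_block_mat (1\<^sub>m n) (0\<^sub>m n 1) (- (c * N)) (1\<^sub>m 1)"
  define R where "R = four_block_mat (1\<^sub>m n) (- (N * b)) (0\<^sub>m 1 n) (1\<^sub>m 1)"
  define D' where "D' = four_block_mat N (0\<^sub>m n 1) (0\<^sub>m 1 n) (- mat1 w)"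
  have K: "mat_inverse (n + 1) (border_mat A b c) (R * D' * L)"
    using mat_inverse_conj[OF border_mat_elimination_factors[OF _ _ _] border_mat_carrier D]
      border_mat_elimination[OF h(1)] cr unfolding L_def R_def D'_def by blast
  have RD: "R * D' = four_block_mat (1\<^sub>m n * N + - (N * b) * 0\<^sub>m 1 n) (1\<^sub>m n * 0\<^sub>m n 1 + - (N * b) * - mat1 w)
     (0\<^sub>m 1 n * N + 1\<^sub>m 1 * 0\<^sub>m 1 n) (0\<^sub>m 1 n * 0\<^sub>m n 1 + 1\<^sub>m 1 * - mat1 w)"
    unfolding R_def D'_def
    by (rule mult_four_block_mat[of _ n n _ 1 _ 1 _ _ n _ 1]) (use cr in auto)
  have corner: "0\<^sub>m 1 n * 0\<^sub>m n 1 + 1\<^sub>m 1 * - mat1 w = - mat1 w" by simp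
  have "R * D' * L = four_block_mat
     ((1\<^sub>m n * N + - (N * b) * 0\<^sub>m 1 n) * 1\<^sub>m n + (1\<^sub>m n * 0\<^sub>m n 1 + - (N * b) * - mat1 w) * - (c * N))
     ((1\<^sub>m n * N + - (N * b) * 0\<^sub>m 1 n) * 0\<^sub>m n 1 + (1\<^sub>m n * 0\<^sub>m n 1 + - (N * b) * - mat1 w) * 1\<^sub>m 1)
     ((0\<^sub>m 1 n * N + 1\<^sub>m 1 * 0\<^sub>m 1 n) * 1\<^sub>m n + (- mat1 w) * - (c * N))
     ((0\<^sub>m 1 n * N + 1\<^sub>m 1 * 0\<^sub>m 1 n) * 0\<^sub>m n 1 + (- mat1 w) * 1\<^sub>m 1)"
    unfolding RD corner L_def
    by (rule mult_four_block_mat[of _ n n _ 1 _ 1 _ _ n _ 1]) (use cr in auto)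
  hence "(R * D' * L) $$ (n, n) = - w" using cr by (simp add: mat1_uminus)
  thus ?thesis using lin_rep_inverse_entry[OF K, of n n] by auto
qed

text \<open>The matrix [1 c 0; 0 A b; 0 0 1], whose inverse has c A\<inverse> b as its top right entry:
  this places linearly represented elements in the rational closure.\<close>

definition realization_mat :: "nat \<Rightarrow> 'a::ring_1 mat \<Rightarrow> 'a mat \<Rightarrow> 'a mat \<Rightarrow> 'a mat" where
  "realization_mat n A c b =
     four_block_mat (1\<^sub>m 1) (four_block_mat c (0\<^sub>m 1 1) (0\<^sub>m 0 n) (0\<^sub>m 0 1)) (0\<^sub>m (n + 1) 1)
       (four_block_mat A b (0\<^sub>m 1 n) (1\<^sub>m 1))"

lemma lin_rep_realization_mat:
  assumes r: "lin_rep n A c b N u"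
  shows "\<exists>K. mat_inverse (1 + (n + 1)) (realization_mat n A c b) K \<and> K $$ (0, n + 1) = u"
proof -
  have h: "mat_inverse n A N" "mat1 u = c * N * b" using r by (auto simp: lin_rep_def)
  note cr = lin_rep_carrier[OF r]
  define R where "R = four_block_mat c (0\<^sub>m 1 1) (0\<^sub>m 0 n) (0\<^sub>m 0 1)"
  define D' where "D' = four_block_mat N (- (N * b * 1\<^sub>m 1)) (0\<^sub>m 1 n) (1\<^sub>m 1)"
  have R: "R \<in> carrier_mat 1 (n + 1)" and D'c: "D' \<in> carrier_mat (n + 1) (n + 1)"
    unfolding R_def D'_def using cr by auto
  have "mat_inverse (n + 1) (four_block_mat A b (0\<^sub>m 1 n) (1\<^sub>m 1)) D'"
    unfolding D'_def by (rule mat_inverse_upper_block[OF h(1) mat_inverse_one]) (use cr in auto)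
  hence K: "mat_inverse (1 + (n + 1)) (realization_mat n A c b)
      (four_block_mat (1\<^sub>m 1) (- (1\<^sub>m 1 * R * D')) (0\<^sub>m (n + 1) 1) D')"
    unfolding realization_mat_def R_def[symmetric]
    by (rule mat_inverse_upper_block[OF mat_inverse_one]) (use R in auto)
  have "R * D' = four_block_mat (c * N + 0\<^sub>m 1 1 * 0\<^sub>m 1 n) (c * - (N * b * 1\<^sub>m 1) + 0\<^sub>m 1 1 * 1\<^sub>m 1)
     (0\<^sub>m 0 n * N + 0\<^sub>m 0 1 * 0\<^sub>m 1 n) (0\<^sub>m 0 n * - (N * b * 1\<^sub>m 1) + 0\<^sub>m 0 1 * 1\<^sub>m 1)"
    unfolding R_def D'_def
    by (rule mult_four_block_mat[of _ 1 n _ 1 _ 0 _ _ n _ 1]) (use cr in auto)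
  moreover have "c * - (N * b * 1\<^sub>m 1) = - mat1 u"
    unfolding h(2) using cr by (simp add: assoc_mult_mat_dims)
  ultimately have "(R * D') $$ (0, n) = - u" using cr by (simp add: mat1_uminus)
  hence "four_block_mat (1\<^sub>m 1) (- (1\<^sub>m 1 * R * D')) (0\<^sub>m (n + 1) 1) D' $$ (0, n + 1) = u"
    using D'c R by simp
  thus ?thesis using K by blast
qed

lemma complex_algD:
  assumes "complex_alg emb"
  shows "emb 0 = 0" "emb 1 = 1" "emb (- 1) = - 1"
proof -
  have a: "\<And>c e. emb (c + e) = emb c + emb e" and o: "emb 1 = 1"
    using assms unfolding complex_alg_def by blast+
  have "emb 0 + emb 0 = emb 0 + 0" using a[of 0 0] by simp
  thus z: "emb 0 = 0" by (rule add_left_imp_eq)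
  show "emb 1 = 1" by (rule o)
  have "1 + emb (- 1) = 0" using a[of 1 "- 1"] o z by simp
  thus "emb (- 1) = - 1" by (metis add.commute add_eq_0_iff)
qed

fun psum :: "ncpoly list \<Rightarrow> ncpoly" where
  "psum [] = PConst 0"
| "psum (p # ps) = PAdd p (psum ps)"

lemma pvars_psum: "pvars (psum ps) = (\<Union>p\<in>set ps. pvars p)"
  by (induction ps) auto

lemma peval_psum: "complex_alg emb \<Longrightarrow> peval emb X (psum ps) = sum_list (map (peval emb X) ps)"
  by (induction ps) (simp_all add: complex_algD)

definition pmat_mult :: "ncpoly mat \<Rightarrow> ncpoly mat \<Rightarrow> ncpoly mat" where
  "pmat_mult A B = mat (dim_row A) (dim_col B)
     (\<lambda>(i, j). psum (map (\<lambda>k. PMul (A $$ (i, k)) (B $$ (k, j))) [0..<dim_col A]))"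

lemma mat_eval_dims [simp]:
  "dim_row (mat_eval emb X A) = dim_row A" "dim_col (mat_eval emb X A) = dim_col A"
  unfolding mat_eval_def by auto

lemma mat_eval_index [simp]:
  "i < dim_row A \<Longrightarrow> j < dim_col A \<Longrightarrow> mat_eval emb X A $$ (i, j) = peval emb X (A $$ (i, j))"
  unfolding mat_eval_def by auto

lemma mat_eval_pmat_mult:
  assumes "complex_alg emb" "dim_col A = dim_row B"
  shows "mat_eval emb X (pmat_mult A B) = mat_eval emb X A * mat_eval emb X B"
proof (rule eq_matI)
  fix i j assume ij: "i < dim_row (mat_eval emb X A * mat_eval emb X B)"
    "j < dim_col (mat_eval emb X A * mat_eval emb X B)"
  have "mat_eval emb X (pmat_mult A B) $$ (i, j)
      = sum_list (map (\<lambda>k. peval emb X (A $$ (i, k)) * peval emb X (B $$ (k, j))) [0..<dim_col A])"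
    using ij by (simp add: pmat_mult_def peval_psum[OF assms(1)] o_def)
  also have "\<dots> = (mat_eval emb X A * mat_eval emb X B) $$ (i, j)"
    using ij assms(2) by (simp add: scalar_prod_def interv_sum_list_conv_sum_set_nat)
  finally show "mat_eval emb X (pmat_mult A B) $$ (i, j) = (mat_eval emb X A * mat_eval emb X B) $$ (i, j)" .
qed (auto simp: pmat_mult_def)

lemma is_poly_mat_pmat_mult:
  "is_poly_mat d A \<Longrightarrow> is_poly_mat d B \<Longrightarrow> dim_col A = dim_row B \<Longrightarrow> is_poly_mat d (pmat_mult A B)"
  unfolding is_poly_mat_def is_poly_def pmat_mult_def by (auto simp: pvars_psum subset_iff)

lemma mat_eval_four_block:
  assumes "A1 \<in> carrier_mat nr1 nc1" "A2 \<in> carrier_mat nr1 nc2"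
    "A3 \<in> carrier_mat nr2 nc1" "A4 \<in> carrier_mat nr2 nc2"
  shows "mat_eval emb X (four_block_mat A1 A2 A3 A4) =
    four_block_mat (mat_eval emb X A1) (mat_eval emb X A2) (mat_eval emb X A3) (mat_eval emb X A4)"
  unfolding mat_eval_def by (rule map_four_block_mat[OF assms])

lemma is_poly_mat_four_block:
  assumes "A1 \<in> carrier_mat nr1 nc1" "A2 \<in> carrier_mat nr1 nc2"
    "A3 \<in> carrier_mat nr2 nc1" "A4 \<in> carrier_mat nr2 nc2"
    "is_poly_mat d A1" "is_poly_mat d A2" "is_poly_mat d A3" "is_poly_mat d A4"
  shows "is_poly_mat d (four_block_mat A1 A2 A3 A4)"
  using assms unfolding is_poly_mat_def carrier_mat_def by (auto simp del: One_nat_def)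

lemma inverse_entry_in_rat_closure:
  assumes W: "is_poly_mat d W" and K: "mat_inverse m (mat_eval emb Z W) K" and "i < m" "j < m"
  shows "K $$ (i, j) \<in> rat_closure d emb Z"
proof -
  have c: "mat_eval emb Z W \<in> carrier_mat m m" "K \<in> carrier_mat m m"
    "mat_eval emb Z W * K = 1\<^sub>m m" "K * mat_eval emb Z W = 1\<^sub>m m"
    using K unfolding mat_inverse_def by auto
  hence Wc: "W \<in> carrier_mat m m" unfolding carrier_mat_def by simp
  hence "W \<in> Sigma d emb Z UNIV" unfolding Sigma_def inv_in_def entries_in_def
    using W c by (auto simp: square_mat.simps)
  thus ?thesis unfolding rat_closure_def using Wc c assms(3,4) by blast
qed

lemma subalgebra_zero: "subalgebra emb S \<Longrightarrow> complex_alg emb \<Longrightarrow> 0 \<in> S"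
  unfolding subalgebra_def using complex_algD(1)[of emb] by (metis mult_zero_left)

lemma subalgebra_sum:
  assumes S: "subalgebra emb S" "complex_alg emb" and "finite K" "\<And>k. k \<in> K \<Longrightarrow> g k \<in> S"
  shows "sum g K \<in> S"
  using assms(3,4)
proof (induction K rule: finite_induct)
  case empty thus ?case using subalgebra_zero[OF S] by simp
next
  case (insert x F)
  thus ?case using S(1) unfolding subalgebra_def by simp
qed

lemma alg_hom_on_zero:
  assumes S: "subalgebra embA S" "complex_alg embA" and f: "alg_hom_on embA embB S f"
  shows "f 0 = 0"
  using f subalgebra_zero[OF S] unfolding alg_hom_on_def by (metis add.right_neutral add_left_cancel)

lemma alg_hom_on_sum:
  assumes S: "subalgebra embA S" "complex_alg embA" and f: "alg_hom_on embA embB S f"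
    and "finite K" "\<And>k. k \<in> K \<Longrightarrow> g k \<in> S"
  shows "f (sum g K) = (\<Sum>k\<in>K. f (g k))"
  using assms(4,5)
proof (induction K rule: finite_induct)
  case empty thus ?case using alg_hom_on_zero[OF S f] by simp
next
  case (insert x F)
  have "sum g F \<in> S" by (rule subalgebra_sum[OF S]) (use insert in auto)
  moreover have "g x \<in> S" using insert by auto
  ultimately have "f (g x + sum g F) = f (g x) + f (sum g F)" using f unfolding alg_hom_on_def by blast
  thus ?case using insert by simp
qed

lemma entries_in_mult:
  assumes S: "subalgebra emb S" "complex_alg emb" and P: "entries_in S P" and Q: "entries_in S Q"
    and d: "dim_col P = dim_row Q"
  shows "entries_in S (P * Q)"
  unfolding entries_in_def
proof (intro allI impI)
  fix i j assume ij: "i < dim_row (P * Q)" "j < dim_col (P * Q)"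
  have "(\<Sum>k\<in>{0..<dim_col P}. P $$ (i, k) * Q $$ (k, j)) \<in> S"
    using P Q ij d S(1) unfolding entries_in_def subalgebra_def by (intro subalgebra_sum[OF S]) auto
  thus "(P * Q) $$ (i, j) \<in> S" using ij d by (auto simp: scalar_prod_def)
qed

lemma map_mat_mult_alg_hom_on:
  assumes S: "subalgebra embA S" "complex_alg embA" and f: "alg_hom_on embA embB S f"
    and P: "entries_in S P" and Q: "entries_in S Q" and d: "dim_col P = dim_row Q"
  shows "map_mat f (P * Q) = map_mat f P * map_mat f Q"
proof (rule eq_matI)
  fix i j assume ij: "i < dim_row (map_mat f P * map_mat f Q)" "j < dim_col (map_mat f P * map_mat f Q)"
  have PQ: "P $$ (i, k) \<in> S" "Q $$ (k, j) \<in> S" if "k < dim_col P" for k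
    using P Q ij d that unfolding entries_in_def by auto
  have "map_mat f (P * Q) $$ (i, j) = f (\<Sum>k\<in>{0..<dim_col P}. P $$ (i, k) * Q $$ (k, j))"
    using ij d by (auto simp: scalar_prod_def)
  also have "\<dots> = (\<Sum>k\<in>{0..<dim_col P}. f (P $$ (i, k) * Q $$ (k, j)))"
    using PQ S(1) unfolding subalgebra_def by (intro alg_hom_on_sum[OF S f]) auto
  also have "\<dots> = (\<Sum>k\<in>{0..<dim_col P}. f (P $$ (i, k)) * f (Q $$ (k, j)))"
    using PQ f unfolding alg_hom_on_def by (intro sum.cong) auto
  also have "\<dots> = (map_mat f P * map_mat f Q) $$ (i, j)"
    using ij d by (auto simp: scalar_prod_def)
  finally show "map_mat f (P * Q) $$ (i, j) = (map_mat f P * map_mat f Q) $$ (i, j)" .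
qed auto

lemma entries_in_mat_eval:
  "is_poly_mat d A \<Longrightarrow> (\<And>p. is_poly d p \<Longrightarrow> peval emb Z p \<in> S) \<Longrightarrow> entries_in S (mat_eval emb Z A)"
  unfolding entries_in_def is_poly_mat_def by auto

lemma map_mat_mat_eval:
  "is_poly_mat d A \<Longrightarrow> (\<And>p. is_poly d p \<Longrightarrow> f (peval embA X p) = peval embB Y p) \<Longrightarrow>
   map_mat f (mat_eval embA X A) = mat_eval embB Y A"
  by (rule eq_matI) (auto simp: is_poly_mat_def)

lemma subhom_cong:
  assumes sh: "subhom d embA X embB Y U f" and eq: "\<And>u. u \<in> U \<Longrightarrow> g u = f u"
  shows "subhom d embA X embB Y U g"
proof -
  have sa: "subalgebra embA U" and fh: "alg_hom_on embA embB U f"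
    using sh unfolding subhom_def by blast+
  have "alg_hom_on embA embB U g"
    using fh sa eq unfolding alg_hom_on_def subalgebra_def by simp
  moreover have "g ` U = f ` U" using eq by (auto simp: image_def)
  ultimately show ?thesis using sh eq unfolding subhom_def by simp
qed

lemma reval_RInv:
  assumes "reval emb X p = Some a" "a * w = 1" "w * a = 1"
  shows "reval emb X (RInv p) = Some w"
proof -
  have "(THE w'. a * w' = 1 \<and> w' * a = 1) = w"
    by (rule the_equality) (use assms in \<open>auto, metis mult.assoc mult_1_left mult_1_right\<close>)
  thus ?thesis using assms by auto
qed

section \<open>Jointly represented elements\<close>

locale eval_pair =
  fixes d :: nat and embA :: "complex \<Rightarrow> 'a::ring_1" and X :: "nat \<Rightarrow> 'a"
    and embB :: "complex \<Rightarrow> 'b::ring_1" and Y :: "nat \<Rightarrow> 'b"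
  assumes algA: "complex_alg embA" and algB: "complex_alg embB"
begin

definition poly_pair :: "'a mat \<Rightarrow> 'b mat \<Rightarrow> bool" where
  "poly_pair P Q \<longleftrightarrow> (\<exists>A. is_poly_mat d A \<and> P = mat_eval embA X A \<and> Q = mat_eval embB Y A)"

lemma poly_pair_const:
  assumes "P \<in> carrier_mat n m" "Q \<in> carrier_mat n m"
    "\<And>i j. i < n \<Longrightarrow> j < m \<Longrightarrow> P $$ (i, j) = embA (a i j) \<and> Q $$ (i, j) = embB (a i j)"
  shows "poly_pair P Q"
  unfolding poly_pair_def
proof (intro exI conjI)
  let ?A = "mat n m (\<lambda>(i, j). PConst (a i j))"
  show "is_poly_mat d ?A" unfolding is_poly_mat_def is_poly_def by auto
  show "P = mat_eval embA X ?A" "Q = mat_eval embB Y ?A" by (rule eq_matI; use assms in auto)+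
qed

lemma poly_pair_zero: "poly_pair (0\<^sub>m n m) (0\<^sub>m n m)"
  by (rule poly_pair_const[where a = "\<lambda>_ _. 0"]) (auto simp: algA algB complex_algD)

lemma poly_pair_one: "poly_pair (1\<^sub>m n) (1\<^sub>m n)"
  by (rule poly_pair_const[where a = "\<lambda>i j. if i = j then 1 else 0"])
    (auto simp: algA algB complex_algD)

lemma poly_pair_unit_row: "poly_pair (unit_row n k) (unit_row n k)"
  by (rule poly_pair_const[where a = "\<lambda>i j. if j = k then 1 else 0"])
    (auto simp: algA algB complex_algD unit_row_def)

lemma poly_pair_unit_col: "poly_pair (unit_col n k) (unit_col n k)"
  by (rule poly_pair_const[where a = "\<lambda>i j. if i = k then 1 else 0"])
    (auto simp: algA algB complex_algD unit_col_def)

lemma poly_pair_mat1: "is_poly d p \<Longrightarrow> poly_pair (mat1 (peval embA X p)) (mat1 (peval embB Y p))"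
  unfolding poly_pair_def
  by (intro exI[of _ "mat1 p"] conjI) (auto simp: is_poly_mat_def mat1_def intro!: eq_matI)

lemma poly_pair_four_block:
  assumes "poly_pair P1 Q1" "poly_pair P2 Q2" "poly_pair P3 Q3" "poly_pair P4 Q4"
    "dim_row P2 = dim_row P1" "dim_col P3 = dim_col P1"
    "dim_row P4 = dim_row P3" "dim_col P4 = dim_col P2"
  shows "poly_pair (four_block_mat P1 P2 P3 P4) (four_block_mat Q1 Q2 Q3 Q4)"
proof -
  obtain A1 A2 A3 A4 where A: "is_poly_mat d A1" "is_poly_mat d A2" "is_poly_mat d A3" "is_poly_mat d A4"
    and P: "P1 = mat_eval embA X A1" "P2 = mat_eval embA X A2" "P3 = mat_eval embA X A3" "P4 = mat_eval embA X A4"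
    and Q: "Q1 = mat_eval embB Y A1" "Q2 = mat_eval embB Y A2" "Q3 = mat_eval embB Y A3" "Q4 = mat_eval embB Y A4"
    using assms(1-4) unfolding poly_pair_def by metis
  have c: "A1 \<in> carrier_mat (dim_row A1) (dim_col A1)" "A2 \<in> carrier_mat (dim_row A1) (dim_col A2)"
    "A3 \<in> carrier_mat (dim_row A3) (dim_col A1)" "A4 \<in> carrier_mat (dim_row A3) (dim_col A2)"
    using assms(5-8) unfolding P by auto
  show ?thesis unfolding poly_pair_def P Q mat_eval_four_block[OF c, symmetric]
    using is_poly_mat_four_block[OF c A] by blast
qed

lemma poly_pair_uminus:
  assumes "poly_pair P Q"
  shows "poly_pair (- P) (- Q)"
proof -
  obtain A where A: "is_poly_mat d A" "P = mat_eval embA X A" "Q = mat_eval embB Y A"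
    using assms unfolding poly_pair_def by blast
  let ?A = "map_mat (PMul (PConst (- 1))) A"
  have "is_poly_mat d ?A" using A(1) unfolding is_poly_mat_def is_poly_def by auto
  moreover have "- P = mat_eval embA X ?A" "- Q = mat_eval embB Y ?A"
    by (rule eq_matI; use A in \<open>auto simp: algA algB complex_algD\<close>)+
  ultimately show ?thesis unfolding poly_pair_def by blast
qed

lemma poly_pair_mult:
  assumes "poly_pair P Q" "poly_pair P' Q'" "dim_col P = dim_row P'"
  shows "poly_pair (P * P') (Q * Q')"
proof -
  obtain A A' where A: "is_poly_mat d A" "P = mat_eval embA X A" "Q = mat_eval embB Y A"
    and A': "is_poly_mat d A'" "P' = mat_eval embA X A'" "Q' = mat_eval embB Y A'"
    using assms(1,2) unfolding poly_pair_def by blast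
  have "dim_col A = dim_row A'" using assms(3) A A' by simp
  thus ?thesis unfolding poly_pair_def A A'
    using is_poly_mat_pmat_mult[OF A(1) A'(1)] mat_eval_pmat_mult[OF algA] mat_eval_pmat_mult[OF algB]
    by metis
qed

lemma poly_pair_border_mat:
  assumes "poly_pair AX AY" "poly_pair bX bY" "poly_pair cX cY"
    "AX \<in> carrier_mat n n" "bX \<in> carrier_mat n 1" "cX \<in> carrier_mat 1 n"
  shows "poly_pair (border_mat AX bX cX) (border_mat AY bY cY)"
  unfolding border_mat_def by (rule poly_pair_four_block[OF assms(1-3) poly_pair_zero]) (use assms in auto)

definition joint_rep :: "'a \<Rightarrow> 'b \<Rightarrow> bool" where
  "joint_rep u v \<longleftrightarrow> (\<exists>n AX AY cX cY bX bY NX NY.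
     poly_pair AX AY \<and> poly_pair cX cY \<and> poly_pair bX bY \<and>
     lin_rep n AX cX bX NX u \<and> lin_rep n AY cY bY NY v)"

lemma joint_repI:
  "poly_pair AX AY \<Longrightarrow> poly_pair cX cY \<Longrightarrow> poly_pair bX bY \<Longrightarrow>
   lin_rep n AX cX bX NX u \<Longrightarrow> lin_rep n AY cY bY NY v \<Longrightarrow> joint_rep u v"
  unfolding joint_rep_def by blast

lemma joint_repE:
  assumes "joint_rep u v"
  obtains n AX AY cX cY bX bY NX NY where
    "poly_pair AX AY" "poly_pair cX cY" "poly_pair bX bY"
    "lin_rep n AX cX bX NX u" "lin_rep n AY cY bY NY v"
  using assms unfolding joint_rep_def by blast

lemma joint_rep_poly: "is_poly d p \<Longrightarrow> joint_rep (peval embA X p) (peval embB Y p)"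
  by (rule joint_repI[OF poly_pair_one poly_pair_mat1 poly_pair_one lin_rep_scalar lin_rep_scalar])

lemma joint_rep_const: "joint_rep (embA c) (embB c)"
  using joint_rep_poly[of "PConst c"] by (simp add: is_poly_def)

lemma joint_rep_one: "joint_rep 1 1"
  using joint_rep_const[of 1] by (simp add: algA algB complex_algD)

lemma joint_rep_var: "i < d \<Longrightarrow> joint_rep (X i) (Y i)"
  using joint_rep_poly[of "PVar i"] by (simp add: is_poly_def)

lemma joint_rep_uminus: "joint_rep u v \<Longrightarrow> joint_rep (- u) (- v)"
  by (erule joint_repE, rule joint_repI[OF _ poly_pair_uminus _ lin_rep_uminus lin_rep_uminus])

lemma joint_rep_add:
  assumes "joint_rep u1 v1" "joint_rep u2 v2"
  shows "joint_rep (u1 + u2) (v1 + v2)"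
proof -
  obtain n1 AX1 AY1 cX1 cY1 bX1 bY1 NX1 NY1 where 1: "poly_pair AX1 AY1" "poly_pair cX1 cY1"
    "poly_pair bX1 bY1" "lin_rep n1 AX1 cX1 bX1 NX1 u1" "lin_rep n1 AY1 cY1 bY1 NY1 v1"
    using assms(1) by (rule joint_repE)
  obtain n2 AX2 AY2 cX2 cY2 bX2 bY2 NX2 NY2 where 2: "poly_pair AX2 AY2" "poly_pair cX2 cY2"
    "poly_pair bX2 bY2" "lin_rep n2 AX2 cX2 bX2 NX2 u2" "lin_rep n2 AY2 cY2 bY2 NY2 v2"
    using assms(2) by (rule joint_repE)
  note d = lin_rep_dims[OF 1(4)] lin_rep_dims[OF 2(4)]
  show ?thesis
    by (rule joint_repI[OF poly_pair_four_block[OF 1(1) poly_pair_zero poly_pair_zero 2(1)]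
          poly_pair_four_block[OF 1(2) 2(2) poly_pair_zero poly_pair_zero]
          poly_pair_four_block[OF 1(3) poly_pair_zero 2(3) poly_pair_zero]
          lin_rep_add[OF 1(4) 2(4)] lin_rep_add[OF 1(5) 2(5)]])
      (use d in simp_all)
qed

lemma joint_rep_mult:
  assumes "joint_rep u1 v1" "joint_rep u2 v2"
  shows "joint_rep (u1 * u2) (v1 * v2)"
proof -
  obtain n1 AX1 AY1 cX1 cY1 bX1 bY1 NX1 NY1 where 1: "poly_pair AX1 AY1" "poly_pair cX1 cY1"
    "poly_pair bX1 bY1" "lin_rep n1 AX1 cX1 bX1 NX1 u1" "lin_rep n1 AY1 cY1 bY1 NY1 v1"
    using assms(1) by (rule joint_repE)
  obtain n2 AX2 AY2 cX2 cY2 bX2 bY2 NX2 NY2 where 2: "poly_pair AX2 AY2" "poly_pair cX2 cY2"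
    "poly_pair bX2 bY2" "lin_rep n2 AX2 cX2 bX2 NX2 u2" "lin_rep n2 AY2 cY2 bY2 NY2 v2"
    using assms(2) by (rule joint_repE)
  note d = lin_rep_dims[OF 1(4)] lin_rep_dims[OF 2(4)]
  have bc: "poly_pair (- (bX1 * cX2)) (- (bY1 * cY2))"
    by (rule poly_pair_uminus[OF poly_pair_mult[OF 1(3) 2(2)]]) (use d in simp)
  show ?thesis
    by (rule joint_repI[OF poly_pair_four_block[OF 1(1) bc poly_pair_zero 2(1)]
          poly_pair_four_block[OF 1(2) poly_pair_zero poly_pair_zero poly_pair_zero]
          poly_pair_four_block[OF poly_pair_zero poly_pair_zero 2(3) poly_pair_zero]
          lin_rep_mult[OF 1(4) 2(4)] lin_rep_mult[OF 1(5) 2(5)]])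
      (use d in simp_all)
qed

lemma joint_rep_rat_closure:
  assumes "joint_rep u v"
  shows "u \<in> rat_closure d embA X" "v \<in> rat_closure d embB Y"
proof -
  obtain n AX AY cX cY bX bY NX NY where 1: "poly_pair AX AY" "poly_pair cX cY" "poly_pair bX bY"
    "lin_rep n AX cX bX NX u" "lin_rep n AY cY bY NY v"
    using assms by (rule joint_repE)
  note dims = lin_rep_dims[OF 1(4)]
  have "poly_pair (realization_mat n AX cX bX) (realization_mat n AY cY bY)"
    unfolding realization_mat_def
    by (rule poly_pair_four_block[OF poly_pair_one
          poly_pair_four_block[OF 1(2) poly_pair_zero poly_pair_zero poly_pair_zero]
          poly_pair_zero poly_pair_four_block[OF 1(1) 1(3) poly_pair_zero poly_pair_one]])
      (use dims in simp_all)
  then obtain W where W: "is_poly_mat d W" "realization_mat n AX cX bX = mat_eval embA X W"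
    "realization_mat n AY cY bY = mat_eval embB Y W"
    unfolding poly_pair_def by blast
  obtain KX where "mat_inverse (1 + (n + 1)) (mat_eval embA X W) KX" "KX $$ (0, n + 1) = u"
    using lin_rep_realization_mat[OF 1(4)] W(2) by auto
  thus "u \<in> rat_closure d embA X" using inverse_entry_in_rat_closure[OF W(1)] by fastforce
  obtain KY where "mat_inverse (1 + (n + 1)) (mat_eval embB Y W) KY" "KY $$ (0, n + 1) = v"
    using lin_rep_realization_mat[OF 1(5)] W(3) by auto
  thus "v \<in> rat_closure d embB Y" using inverse_entry_in_rat_closure[OF W(1)] by fastforce
qed

text \<open>The condition on Sigma in the definition of a subhomomorphism puts the inverse of A(X)
  into its domain, and a homomorphism maps it to the inverse of A(Y).\<close>

lemma subhom_mat_inverse: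
  assumes sh: "subhom d embA X embB Y S f" and A: "is_poly_mat d A"
    and NX: "mat_inverse n (mat_eval embA X A) NX" and NY: "mat_inverse n (mat_eval embB Y A) NY"
  shows "entries_in S NX" "map_mat f NX = NY"
proof -
  have S: "subalgebra embA S" "complex_alg embA" and f: "alg_hom_on embA embB S f"
    and polyS: "\<And>p. is_poly d p \<Longrightarrow> peval embA X p \<in> S"
    and polyf: "\<And>p. is_poly d p \<Longrightarrow> f (peval embA X p) = peval embB Y p"
    and Sig: "Sigma d embB Y (rat_closure d embB Y) \<subseteq> Sigma d embA X S"
    using sh algA unfolding subhom_def by auto
  have Ac: "A \<in> carrier_mat n n" and NYc: "NY \<in> carrier_mat n n"
    using NY unfolding mat_inverse_def carrier_mat_def by auto
  have "entries_in (rat_closure d embB Y) NY"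
    unfolding entries_in_def using inverse_entry_in_rat_closure[OF A NY] NYc by auto
  hence "A \<in> Sigma d embB Y (rat_closure d embB Y)"
    using NY A Ac unfolding Sigma_def inv_in_def mat_inverse_def by (auto simp: square_mat.simps)
  hence "inv_in S (mat_eval embA X A)" using Sig unfolding Sigma_def by blast
  then obtain m N where N: "mat_eval embA X A \<in> carrier_mat m m" "N \<in> carrier_mat m m"
    "entries_in S N" "mat_eval embA X A * N = 1\<^sub>m m"
    unfolding inv_in_def by blast
  have "m = n" using N(1) Ac by auto
  hence "N = NX" using mat_inverse_unique[OF NX] N by auto
  thus eN: "entries_in S NX" using N(3) by simp
  have eA: "entries_in S (mat_eval embA X A)" by (rule entries_in_mat_eval[OF A polyS])
  have "mat_eval embB Y A * map_mat f NX = map_mat f (mat_eval embA X A * NX)"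
    using map_mat_mult_alg_hom_on[OF S f eA eN] map_mat_mat_eval[OF A polyf] NX
    unfolding mat_inverse_def by auto
  also have "\<dots> = 1\<^sub>m n"
    using NX f alg_hom_on_zero[OF S f] unfolding mat_inverse_def alg_hom_on_def
    by (intro eq_matI) auto
  finally show "map_mat f NX = NY"
    using mat_inverse_unique[OF NY] NX unfolding mat_inverse_def by auto
qed

lemma subhom_joint_rep:
  assumes sh: "subhom d embA X embB Y S f" and R: "joint_rep u v"
  shows "u \<in> S" "f u = v"
proof -
  have S: "subalgebra embA S" "complex_alg embA" and f: "alg_hom_on embA embB S f"
    and polyS: "\<And>p. is_poly d p \<Longrightarrow> peval embA X p \<in> S"
    and polyf: "\<And>p. is_poly d p \<Longrightarrow> f (peval embA X p) = peval embB Y p"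
    using sh algA unfolding subhom_def by auto
  obtain n AX AY cX cY bX bY NX NY where 1: "poly_pair AX AY" "poly_pair cX cY" "poly_pair bX bY"
    "lin_rep n AX cX bX NX u" "lin_rep n AY cY bY NY v"
    using R by (rule joint_repE)
  obtain A C B where A: "is_poly_mat d A" "AX = mat_eval embA X A" "AY = mat_eval embB Y A"
    and C: "is_poly_mat d C" "cX = mat_eval embA X C" "cY = mat_eval embB Y C"
    and B: "is_poly_mat d B" "bX = mat_eval embA X B" "bY = mat_eval embB Y B"
    using 1(1-3) unfolding poly_pair_def by blast
  have X: "mat_inverse n AX NX" "mat1 u = cX * NX * bX"
    and Y: "mat_inverse n AY NY" "mat1 v = cY * NY * bY"
    using 1(4,5) unfolding lin_rep_def by auto
  note dims = lin_rep_dims[OF 1(4)]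
  have eN: "entries_in S NX" and mN: "map_mat f NX = NY"
    using subhom_mat_inverse[OF sh A(1)] X(1) Y(1) unfolding A by auto
  have eC: "entries_in S cX" unfolding C by (rule entries_in_mat_eval[OF C(1) polyS])
  have eB: "entries_in S bX" unfolding B by (rule entries_in_mat_eval[OF B(1) polyS])
  have eCN: "entries_in S (cX * NX)" by (rule entries_in_mult[OF S eC eN]) (use dims in simp)
  have "entries_in S (mat1 u)" unfolding X(2) by (rule entries_in_mult[OF S eCN eB]) (use dims in simp)
  thus "u \<in> S" unfolding entries_in_def by auto
  have "mat1 (f u) = map_mat f (mat1 u)" unfolding mat1_def by (rule eq_matI) auto
  also have "\<dots> = map_mat f cX * map_mat f NX * map_mat f bX"
    unfolding X(2) using map_mat_mult_alg_hom_on[OF S f eCN eB] map_mat_mult_alg_hom_on[OF S f eC eN] dims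
    by simp
  also have "\<dots> = mat1 v"
    unfolding Y(2) mN C B using map_mat_mat_eval[OF C(1) polyf] map_mat_mat_eval[OF B(1) polyf] by simp
  finally show "f u = v" by (simp add: mat1_eq_iff)
qed

end

locale rank_domination = eval_pair d embA X embB Y
  for d :: nat and embA :: "complex \<Rightarrow> 'a::ring_1" and X :: "nat \<Rightarrow> 'a"
    and embB :: "complex \<Rightarrow> 'b::ring_1" and Y :: "nat \<Rightarrow> 'b" +
  fixes rkA :: "'a mat \<Rightarrow> real" and rkB :: "'b mat \<Rightarrow> real"
  assumes srA: "sylvester_rank rkA" and reA: "regular_rank rkA"
    and srB: "sylvester_rank rkB" and faB: "faithful_rank rkB"
    and rank_le: "\<And>A. is_poly_mat d A \<Longrightarrow> rkB (mat_eval embB Y A) \<le> rkA (mat_eval embA X A)"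
begin

lemma poly_pair_rank_le: "poly_pair P Q \<Longrightarrow> rkB Q \<le> rkA P"
  unfolding poly_pair_def using rank_le by auto

lemma joint_rep_rank_le:
  assumes "joint_rep u v"
  shows "rkB (mat1 v) \<le> rkA (mat1 u)"
proof -
  obtain n AX AY cX cY bX bY NX NY where 1: "poly_pair AX AY" "poly_pair cX cY" "poly_pair bX bY"
    "lin_rep n AX cX bX NX u" "lin_rep n AY cY bY NY v"
    using assms by (rule joint_repE)
  have "rkB (border_mat AY bY cY) \<le> rkA (border_mat AX bX cX)"
    using poly_pair_rank_le[OF poly_pair_border_mat[OF 1(1,3,2)]] lin_rep_carrier[OF 1(4)] by blast
  moreover have "rkA (border_mat AX bX cX) = real n + rkA (mat1 u)"
    using rank_border_mat[OF srA] 1(4) unfolding lin_rep_def by auto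
  moreover have "rkB (border_mat AY bY cY) = real n + rkB (mat1 v)"
    using rank_border_mat[OF srB] 1(5) unfolding lin_rep_def by auto
  ultimately show ?thesis by simp
qed

lemma joint_rep_unique:
  assumes "joint_rep u v" "joint_rep u v'"
  shows "v = v'"
proof (rule ccontr)
  assume "v \<noteq> v'"
  hence "mat1 (v - v') \<noteq> 0\<^sub>m 1 1" unfolding mat1_zero mat1_eq_iff by simp
  hence "0 < rkB (mat1 (v - v'))" using faB unfolding faithful_rank_def by auto
  also have "joint_rep 0 (v - v')"
    using joint_rep_add[OF assms(1) joint_rep_uminus[OF assms(2)]] by simp
  hence "rkB (mat1 (v - v')) \<le> rkA (mat1 0)" by (rule joint_rep_rank_le)
  also have "rkA (mat1 0) = 0" unfolding mat1_zero[symmetric] by (rule rank_zero_mat[OF srA])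
  finally show False by simp
qed

lemma joint_rep_inverse:
  assumes R: "joint_rep u v" and w: "v * w = 1" "w * v = 1"
  obtains w' where "u * w' = 1" "w' * u = 1" "joint_rep w' w"
proof -
  have "mat_inverse 1 (mat1 v) (mat1 w)" unfolding mat_inverse_mat1_iff using w ..
  hence "rkA (mat1 u) \<ge> 1" using rank_mat_inverse[OF srB] joint_rep_rank_le[OF R] by fastforce
  then obtain w' where w': "u * w' = 1" "w' * u = 1" using regular_rank_mat1_unit[OF srA reA] by blast
  obtain n AX AY cX cY bX bY NX NY where 1: "poly_pair AX AY" "poly_pair cX cY" "poly_pair bX bY"
    "lin_rep n AX cX bX NX u" "lin_rep n AY cY bY NY v"
    using R by (rule joint_repE)
  obtain KX KY where
    "lin_rep (n + 1) (border_mat AX bX cX) (unit_row (n + 1) n) (unit_col (n + 1) n) KX (- w')"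
    "lin_rep (n + 1) (border_mat AY bY cY) (unit_row (n + 1) n) (unit_col (n + 1) n) KY (- w)"
    using lin_rep_border_mat_inverse[OF 1(4) w'] lin_rep_border_mat_inverse[OF 1(5) w] by blast
  from joint_repI[OF poly_pair_border_mat[OF 1(1,3,2)] poly_pair_unit_row poly_pair_unit_col this]
  have "joint_rep (- w') (- w)" using lin_rep_carrier[OF 1(4)] by blast
  thus ?thesis using that w' joint_rep_uminus by fastforce
qed

lemma joint_rep_mat_inverse:
  assumes A: "is_poly_mat d A" and M: "mat_inverse n (mat_eval embB Y A) M"
  obtains N where "mat_inverse n (mat_eval embA X A) N"
    "\<And>i j. i < n \<Longrightarrow> j < n \<Longrightarrow> joint_rep (N $$ (i, j)) (M $$ (i, j))"
proof -
  have AX: "mat_eval embA X A \<in> carrier_mat n n" using M unfolding mat_inverse_def carrier_mat_def by simp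
  have "real n \<le> rkA (mat_eval embA X A)" using rank_mat_inverse[OF srB M] rank_le[OF A] by simp
  then obtain N where N: "mat_inverse n (mat_eval embA X A) N"
    using regular_rank_imp_mat_inverse[OF srA reA AX] by blast
  have "poly_pair (mat_eval embA X A) (mat_eval embB Y A)" unfolding poly_pair_def using A by blast
  from joint_repI[OF this poly_pair_unit_row poly_pair_unit_col
      lin_rep_inverse_entry[OF N] lin_rep_inverse_entry[OF M]]
  show ?thesis using that N by blast
qed

definition spec_dom :: "'a set" where
  "spec_dom = {u. \<exists>v. joint_rep u v}"

definition spec_map :: "'a \<Rightarrow> 'b" where
  "spec_map u = (SOME v. joint_rep u v)"

lemma spec_map_eq: "joint_rep u v \<Longrightarrow> spec_map u = v"
  unfolding spec_map_def by (metis someI joint_rep_unique)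

lemma joint_rep_spec_map: "u \<in> spec_dom \<Longrightarrow> joint_rep u (spec_map u)"
  unfolding spec_dom_def using spec_map_eq by auto

lemma subhom_spec_map: "subhom d embA X embB Y spec_dom spec_map"
  unfolding subhom_def
proof (intro conjI)
  show "subalgebra embA spec_dom"
    unfolding subalgebra_def spec_dom_def using joint_rep_one joint_rep_add joint_rep_mult joint_rep_const
    by blast
  show "spec_dom \<subseteq> rat_closure d embA X"
    unfolding spec_dom_def using joint_rep_rat_closure(1) by blast
  show "\<forall>p. is_poly d p \<longrightarrow> peval embA X p \<in> spec_dom"
    unfolding spec_dom_def using joint_rep_poly by blast
  show "alg_hom_on embA embB spec_dom spec_map"
    unfolding alg_hom_on_def
    by (auto intro!: spec_map_eq joint_rep_one joint_rep_add joint_rep_mult joint_rep_const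
        joint_rep_spec_map)
  show "spec_map ` spec_dom \<subseteq> rat_closure d embB Y"
    using joint_rep_spec_map joint_rep_rat_closure(2) by blast
  show "\<forall>p. is_poly d p \<longrightarrow> spec_map (peval embA X p) = peval embB Y p"
    using joint_rep_poly spec_map_eq by blast
  show "Sigma d embB Y (rat_closure d embB Y) \<subseteq> Sigma d embA X spec_dom"
  proof
    fix A assume "A \<in> Sigma d embB Y (rat_closure d embB Y)"
    then obtain n M where A: "is_poly_mat d A" "square_mat A" and M: "mat_inverse n (mat_eval embB Y A) M"
      unfolding Sigma_def inv_in_def mat_inverse_def by blast
    obtain N where N: "mat_inverse n (mat_eval embA X A) N"
      and "\<And>i j. i < n \<Longrightarrow> j < n \<Longrightarrow> joint_rep (N $$ (i, j)) (M $$ (i, j))"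
      using joint_rep_mat_inverse[OF A(1) M] by blast
    hence "entries_in spec_dom N" unfolding entries_in_def spec_dom_def using N
      unfolding mat_inverse_def by auto
    thus "A \<in> Sigma d embA X spec_dom"
      using A N unfolding Sigma_def inv_in_def mat_inverse_def by blast
  qed
qed

lemma has_unique_specialization: "unique_specialization d embA X embB Y"
  unfolding unique_specialization_def
proof (intro conjI allI impI exI)
  show "subhom d embA X embB Y spec_dom spec_map" by (rule subhom_spec_map)
  fix S f T g assume S: "subhom d embA X embB Y S f" and T: "subhom d embA X embB Y T g"
  have "subhom d embA X embB Y spec_dom f"
    by (rule subhom_cong[OF subhom_spec_map]) (use subhom_joint_rep(2)[OF S] joint_rep_spec_map in blast)
  thus "subhom_equiv d embA X embB Y S f T g" unfolding subhom_equiv_def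
    using subhom_joint_rep[OF S joint_rep_spec_map] subhom_joint_rep[OF T joint_rep_spec_map]
    by (intro exI[of _ spec_dom]) auto
qed

lemma reval_joint_rep:
  "rvars R \<subseteq> {..<d} \<Longrightarrow> reval embB Y R = Some b \<Longrightarrow> \<exists>a. reval embA X R = Some a \<and> joint_rep a b"
proof (induction R arbitrary: b)
  case (RConst c)
  thus ?case using joint_rep_const by auto
next
  case (RVar i)
  thus ?case using joint_rep_var by auto
next
  case (RAdd p q)
  then obtain b1 b2 a1 a2 where "b = b1 + b2" "reval embA X p = Some a1" "reval embA X q = Some a2"
    "joint_rep a1 b1" "joint_rep a2 b2"
    by (auto split: option.splits)
  thus ?case using joint_rep_add by auto
next
  case (RMul p q)
  then obtain b1 b2 a1 a2 where "b = b1 * b2" "reval embA X p = Some a1" "reval embA X q = Some a2"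
    "joint_rep a1 b1" "joint_rep a2 b2"
    by (auto split: option.splits)
  thus ?case using joint_rep_mult by auto
next
  case (RInv p)
  then obtain b1 w where b1: "reval embB Y p = Some b1" "b1 * w = 1" "w * b1 = 1"
    by (auto split: option.splits if_splits)
  hence b: "b = w" using RInv.prems(2) reval_RInv by fastforce
  obtain a1 where a1: "reval embA X p = Some a1" "joint_rep a1 b1" using RInv b1 by auto
  obtain w' where "a1 * w' = 1" "w' * a1 = 1" "joint_rep w' w"
    using joint_rep_inverse[OF a1(2) b1(2,3)] .
  thus ?case using reval_RInv[OF a1(1)] b by auto
qed

end

theorem proposition2p21:
  fixes embA :: "complex \<Rightarrow> 'a::ring_1" and embB :: "complex \<Rightarrow> 'b::ring_1"
    and rkA :: "'a mat \<Rightarrow> real" and rkB :: "'b mat \<Rightarrow> real"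
    and d :: nat and X :: "nat \<Rightarrow> 'a" and Y :: "nat \<Rightarrow> 'b"
  assumes "complex_alg embA" and "complex_alg embB"
    and "sylvester_rank rkA" and "faithful_rank rkA" and "regular_rank rkA"
    and "sylvester_rank rkB" and "faithful_rank rkB" and "regular_rank rkB"
    and "\<And>A. is_poly_mat d A \<Longrightarrow> rkB (mat_eval embB Y A) \<le> rkA (mat_eval embA X A)"
  shows "unique_specialization d embA X embB Y \<and>
    (\<forall>R b. rvars R \<subseteq> {..<d} \<longrightarrow> reval embB Y R = Some b \<longrightarrow>
       (\<exists>a. reval embA X R = Some a \<and> rkB (mat1 b) \<le> rkA (mat1 a)))"
proof -
  interpret rank_domination d embA X embB Y rkA rkB
    by unfold_locales (use assms in auto)
  show ?thesis using has_unique_specialization reval_joint_rep joint_rep_rank_le by blast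
qed

end
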